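(* Let $G$ be a graph. For all $n\ge 2$ the discrete fundamental group $A_1(G^{(n)})$ is abelian.
   Context: All graphs are connected, simple and locally finite. $G^{(n)}$ is the $n$th reduced power of $G$: the quotient of the Cartesian product graph $G^n$ by the coordinate-permuting action of $\Sigma_n$; equivalently vertices are degree-$n$ monomials in vertices of $G$, adjacent iff they differ by moving one token along one edge of $G$. $A_1$ is the discrete fundamental group: based homotopy classes of eventually-constant graph maps from the integer path graph $\mathbb{Z}$, where a based homotopy is a graph map $\mathbb{Z}\,\square\,I_m\to G^{(n)}$ with based rows, and the product is concatenation. *)

theory Defs
  imports Main "HOL-Library.Multiset" "HOL-Algebra.Group"
begin

definition simple_graph :: "'a set \<Rightarrow> ('a \<Rightarrow> 'a \<Rightarrow> bool) \<Rightarrow> bool" where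
  "simple_graph V E \<longleftrightarrow> (\<forall>x y. E x y \<longrightarrow> x \<in> V \<and> y \<in> V \<and> x \<noteq> y \<and> E y x)"

definition connected_graph :: "'a set \<Rightarrow> ('a \<Rightarrow> 'a \<Rightarrow> bool) \<Rightarrow> bool" where
  "connected_graph V E \<longleftrightarrow> (\<forall>x\<in>V. \<forall>y\<in>V. E\<^sup>*\<^sup>* x y)"

definition locally_finite_graph :: "'a set \<Rightarrow> ('a \<Rightarrow> 'a \<Rightarrow> bool) \<Rightarrow> bool" where
  "locally_finite_graph V E \<longleftrightarrow> (\<forall>x\<in>V. finite {y. E x y})"

text \<open>Vertices of G^(n): degree-n monomials (multisets of size n) in vertices of G.\<close>
definition reduced_power_verts :: "'a set \<Rightarrow> nat \<Rightarrow> 'a multiset set" where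
  "reduced_power_verts V n = {M. set_mset M \<subseteq> V \<and> size M = n}"

definition reduced_power_adj :: "('a \<Rightarrow> 'a \<Rightarrow> bool) \<Rightarrow> 'a multiset \<Rightarrow> 'a multiset \<Rightarrow> bool" where
  "reduced_power_adj E M M' \<longleftrightarrow> (\<exists>v w. v \<in># M \<and> E v w \<and> M' = M - {#v#} + {#w#})"

text \<open>Based, eventually constant graph maps from the integer path graph.
  Graph maps send adjacent vertices to equal or adjacent vertices.\<close>
definition based_loop :: "'v set \<Rightarrow> ('v \<Rightarrow> 'v \<Rightarrow> bool) \<Rightarrow> 'v \<Rightarrow> (int \<Rightarrow> 'v) \<Rightarrow> bool" where
  "based_loop V E x0 f \<longleftrightarrow>
     (\<forall>i. f i \<in> V) \<and> (\<forall>i. f i = f (i + 1) \<or> E (f i) (f (i + 1))) \<and>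
     (\<exists>N::nat. \<forall>i. int N \<le> \<bar>i\<bar> \<longrightarrow> f i = x0)"

text \<open>Based homotopy: a graph map from Z \<box> I_m (I_m the path graph 0..m) with based rows,
  row 0 being f and row m being g.\<close>
definition based_homotopic ::
  "'v set \<Rightarrow> ('v \<Rightarrow> 'v \<Rightarrow> bool) \<Rightarrow> 'v \<Rightarrow> (int \<Rightarrow> 'v) \<Rightarrow> (int \<Rightarrow> 'v) \<Rightarrow> bool" where
  "based_homotopic V E x0 f g \<longleftrightarrow>
     (\<exists>(m::nat) (h::int \<Rightarrow> nat \<Rightarrow> 'v).
        (\<forall>j\<le>m. based_loop V E x0 (\<lambda>i. h i j)) \<and>
        (\<forall>i. \<forall>j<m. h i j = h i (Suc j) \<or> E (h i j) (h i (Suc j))) \<and>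
        (\<forall>i. h i 0 = f i) \<and> (\<forall>i. h i m = g i))"

definition loop_radius :: "'v \<Rightarrow> (int \<Rightarrow> 'v) \<Rightarrow> nat" where
  "loop_radius x0 f = (LEAST N::nat. \<forall>i. int N \<le> \<bar>i\<bar> \<longrightarrow> f i = x0)"

definition loop_concat :: "'v \<Rightarrow> (int \<Rightarrow> 'v) \<Rightarrow> (int \<Rightarrow> 'v) \<Rightarrow> int \<Rightarrow> 'v" where
  "loop_concat x0 f g = (\<lambda>i. if i \<le> 0 then f (i + int (loop_radius x0 f))
                             else g (i - int (loop_radius x0 g)))"

definition loop_class :: "'v set \<Rightarrow> ('v \<Rightarrow> 'v \<Rightarrow> bool) \<Rightarrow> 'v \<Rightarrow> (int \<Rightarrow> 'v) \<Rightarrow> (int \<Rightarrow> 'v) set" where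
  "loop_class V E x0 f = {g. based_loop V E x0 g \<and> based_homotopic V E x0 f g}"

definition A1 :: "'v set \<Rightarrow> ('v \<Rightarrow> 'v \<Rightarrow> bool) \<Rightarrow> 'v \<Rightarrow> (int \<Rightarrow> 'v) set monoid" where
  "A1 V E x0 =
     \<lparr> carrier = {loop_class V E x0 f | f. based_loop V E x0 f},
       mult = (\<lambda>X Y. loop_class V E x0 (loop_concat x0 (SOME f. f \<in> X) (SOME g. g \<in> Y))),
       one = loop_class V E x0 (\<lambda>_. x0) \<rparr>"

end

theory Submission
  imports Defs
begin

text \<open>Loops in the reduced power are handled combinatorially, as walks of token configurations up
  to elementary homotopies (pointwise adjacent walks, repeated vertices).  Fix a base
  configuration \<open>x0\<close> and a token of it sitting at \<open>a\<close>.  Joining every configuration to \<open>x0\<close> by a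
  canonical walk (gather all tokens at \<open>a\<close>, then send them out along fixed paths), each step of a
  loop becomes a closed walk of a single token through one edge of \<open>G\<close>; commuting that token
  past the canonical walk shows that every loop is homotopic to one in which only the token at
  \<open>a\<close> moves.  Since \<open>n \<ge> 2\<close>, two loops can be represented by moving two different tokens \<open>a\<close>
  and \<open>b\<close>, and walks of disjoint groups of tokens commute: their product fills a grid, whose two
  boundary walks are homotopic.\<close>

lemma hd_map_upt_Suc [simp]: "hd (map f [0..<Suc k]) = f 0"
  by (simp add: hd_map del: upt_Suc)

lemma last_map_upt_Suc [simp]: "last (map f [0..<Suc k]) = f k"
  by (simp add: last_map del: upt_Suc)

section \<open>Homotopy of walks in a symmetric graph\<close>

locale symmetric_graph =
  fixes W :: "'v set" and A :: "'v \<Rightarrow> 'v \<Rightarrow> bool"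
  assumes sym_adj: "A x y \<Longrightarrow> A y x"
begin

definition adj_or_eq :: "'v \<Rightarrow> 'v \<Rightarrow> bool" where
  "adj_or_eq x y \<longleftrightarrow> x = y \<or> A x y"

lemma adj_or_eq_refl [simp]: "adj_or_eq x x"
  by (simp add: adj_or_eq_def)

lemma adj_or_eq_sym: "adj_or_eq x y \<Longrightarrow> adj_or_eq y x"
  using sym_adj by (auto simp: adj_or_eq_def)

lemma adj_or_eq_commute: "adj_or_eq x y \<longleftrightarrow> adj_or_eq y x"
  using adj_or_eq_sym by blast

definition walk :: "'v list \<Rightarrow> bool" where
  "walk xs \<longleftrightarrow> xs \<noteq> [] \<and> set xs \<subseteq> W \<and> successively adj_or_eq xs"

lemma walk_append:
  "walk (xs @ ys) \<longleftrightarrow> (xs = [] \<longrightarrow> walk ys) \<and> (ys = [] \<longrightarrow> walk xs) \<and>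
     (xs \<noteq> [] \<longrightarrow> ys \<noteq> [] \<longrightarrow> walk xs \<and> walk ys \<and> adj_or_eq (last xs) (hd ys))"
  by (auto simp: walk_def successively_append_iff)

lemma walk_stutter_iff: "walk (u @ [v, v] @ w) \<longleftrightarrow> walk (u @ [v] @ w)"
  by (auto simp: walk_def successively_append_iff successively_Cons)

lemma walk_rev: "walk xs \<Longrightarrow> walk (rev xs)"
  unfolding walk_def by (auto elim: successively_mono simp: adj_or_eq_sym)

lemma walk_map_upt:
  assumes "\<And>i. i \<le> k \<Longrightarrow> f i \<in> W" and "\<And>i. i < k \<Longrightarrow> adj_or_eq (f i) (f (Suc i))"
  shows "walk (map f [0..<Suc k])"
  using assms unfolding walk_def
  by (auto simp: successively_conv_nth nth_append simp del: upt_Suc)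

lemma walk_nth_adj:
  "walk xs \<Longrightarrow> i < length xs \<Longrightarrow> j < length xs \<Longrightarrow> i = j \<or> i = Suc j \<or> j = Suc i \<Longrightarrow>
     adj_or_eq (xs ! i) (xs ! j)"
  unfolding walk_def using successively_nth[of adj_or_eq xs] adj_or_eq_sym by auto

text \<open>Homotopy of walks with fixed endpoints: the moves are a homotopy of height one
  (pointwise adjacent walks of equal length) and the insertion or deletion of a repeated vertex,
  which is a reparametrisation.\<close>

inductive elementary_homotopy :: "'v list \<Rightarrow> 'v list \<Rightarrow> bool" where
  pointwise: "walk xs \<Longrightarrow> walk ys \<Longrightarrow> list_all2 adj_or_eq xs ys \<Longrightarrow> hd xs = hd ys \<Longrightarrow>
    last xs = last ys \<Longrightarrow> elementary_homotopy xs ys"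
| stutter: "walk (u @ [v] @ w) \<Longrightarrow> elementary_homotopy (u @ [v] @ w) (u @ [v, v] @ w)"
| unstutter: "walk (u @ [v] @ w) \<Longrightarrow> elementary_homotopy (u @ [v, v] @ w) (u @ [v] @ w)"

definition homotopic_walks :: "'v list \<Rightarrow> 'v list \<Rightarrow> bool" where
  "homotopic_walks xs ys \<longleftrightarrow> walk xs \<and> elementary_homotopy\<^sup>*\<^sup>* xs ys"

lemma elementary_homotopy_walks:
  "elementary_homotopy xs ys \<Longrightarrow> walk xs \<and> walk ys \<and> hd xs = hd ys \<and> last xs = last ys"
proof (induction rule: elementary_homotopy.induct)
  case (stutter u v w)
  then show ?case using walk_stutter_iff[of u v w] by (cases u; cases w) auto
next
  case (unstutter u v w)
  then show ?case using walk_stutter_iff[of u v w] by (cases u; cases w) auto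
qed auto

lemma elementary_homotopy_sym: "elementary_homotopy xs ys \<Longrightarrow> elementary_homotopy ys xs"
proof (induction rule: elementary_homotopy.induct)
  case (pointwise xs ys)
  have "list_all2 adj_or_eq ys xs"
    using pointwise(3) adj_or_eq_sym by (simp add: list_all2_conv_all_nth)
  then show ?case using pointwise by (intro elementary_homotopy.pointwise) auto
next
  case (stutter u v w)
  then show ?case using elementary_homotopy.unstutter by simp
next
  case (unstutter u v w)
  then show ?case using elementary_homotopy.stutter by simp
qed

lemma elementary_homotopies_walks:
  "elementary_homotopy\<^sup>*\<^sup>* xs ys \<Longrightarrow> walk xs \<Longrightarrow> walk ys \<and> hd xs = hd ys \<and> last xs = last ys"
  by (induction rule: rtranclp_induct) (auto dest: elementary_homotopy_walks)

lemma homotopic_walks_walks: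
  "homotopic_walks xs ys \<Longrightarrow> walk xs \<and> walk ys \<and> hd xs = hd ys \<and> last xs = last ys"
  using elementary_homotopies_walks homotopic_walks_def by blast

lemma homotopic_walks_refl: "walk xs \<Longrightarrow> homotopic_walks xs xs"
  by (simp add: homotopic_walks_def)

lemma homotopic_walks_trans [trans]:
  "homotopic_walks xs ys \<Longrightarrow> homotopic_walks ys zs \<Longrightarrow> homotopic_walks xs zs"
  by (auto simp: homotopic_walks_def)

lemma homotopic_walks_sym: "homotopic_walks xs ys \<Longrightarrow> homotopic_walks ys xs"
proof -
  have "elementary_homotopy\<^sup>*\<^sup>* ys xs" if "elementary_homotopy\<^sup>*\<^sup>* xs ys" for xs ys
    using that by (induction rule: rtranclp_induct)
      (auto dest: elementary_homotopy_sym intro: converse_rtranclp_into_rtranclp)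
  then show "homotopic_walks xs ys \<Longrightarrow> homotopic_walks ys xs"
    using homotopic_walks_walks homotopic_walks_def by blast
qed

lemma elementary_homotopy_homotopic: "elementary_homotopy xs ys \<Longrightarrow> homotopic_walks xs ys"
  using elementary_homotopy_walks homotopic_walks_def by blast

lemma elementary_homotopy_append_left:
  "elementary_homotopy p q \<Longrightarrow> walk u \<Longrightarrow> adj_or_eq (last u) (hd p) \<Longrightarrow>
     elementary_homotopy (u @ p) (u @ q)"
proof (induction rule: elementary_homotopy.induct)
  case (pointwise xs ys)
  have "list_all2 adj_or_eq (u @ xs) (u @ ys)"
    using pointwise by (intro list_all2_appendI) (auto simp: list_all2_refl)
  then show ?case
    using pointwise by (intro elementary_homotopy.pointwise)
      (auto simp: walk_def successively_append_iff)
next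
  case (stutter u' v w)
  then show ?case using elementary_homotopy.stutter[of "u @ u'" v w] by (auto simp: walk_append)
next
  case (unstutter u' v w)
  then show ?case using elementary_homotopy.unstutter[of "u @ u'" v w]
    by (cases u') (auto simp: walk_append walk_def successively_append_iff)
qed

lemma elementary_homotopy_append_right:
  "elementary_homotopy p q \<Longrightarrow> walk u \<Longrightarrow> adj_or_eq (last p) (hd u) \<Longrightarrow>
     elementary_homotopy (p @ u) (q @ u)"
proof (induction rule: elementary_homotopy.induct)
  case (pointwise xs ys)
  have "list_all2 adj_or_eq (xs @ u) (ys @ u)"
    using pointwise by (intro list_all2_appendI) (auto simp: list_all2_refl)
  then show ?case
    using pointwise by (intro elementary_homotopy.pointwise)
      (auto simp: walk_def successively_append_iff)
next
  case (stutter u' v w)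
  have "walk ((u' @ [v] @ w) @ u)" using stutter by (simp only: walk_append) (auto simp: walk_def)
  then show ?case using elementary_homotopy.stutter[of u' v "w @ u"] by simp
next
  case (unstutter u' v w)
  have "last (u' @ [v, v] @ w) = last (u' @ [v] @ w)" by (cases w) auto
  then have "walk ((u' @ [v] @ w) @ u)"
    using unstutter by (simp only: walk_append) (auto simp: walk_def)
  then show ?case using elementary_homotopy.unstutter[of u' v "w @ u"] by simp
qed

lemma homotopic_walks_append_left:
  assumes "homotopic_walks p q" "walk u" "adj_or_eq (last u) (hd p)"
  shows "homotopic_walks (u @ p) (u @ q)"
proof -
  have "walk p" "elementary_homotopy\<^sup>*\<^sup>* p q" using assms(1) homotopic_walks_def by auto
  from this(2) have "elementary_homotopy\<^sup>*\<^sup>* (u @ p) (u @ q)"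
  proof (induction rule: rtranclp_induct)
    case (step y z)
    then have "hd y = hd p" using elementary_homotopies_walks[OF step(1) \<open>walk p\<close>] by simp
    then show ?case using step(2,3) assms(2,3) elementary_homotopy_append_left[of y z u] by simp
  qed simp
  moreover have "walk (u @ p)" using assms \<open>walk p\<close> by (auto simp: walk_append)
  ultimately show ?thesis by (simp add: homotopic_walks_def)
qed

lemma homotopic_walks_append_right:
  assumes "homotopic_walks p q" "walk u" "adj_or_eq (last p) (hd u)"
  shows "homotopic_walks (p @ u) (q @ u)"
proof -
  have "walk p" "elementary_homotopy\<^sup>*\<^sup>* p q" using assms(1) homotopic_walks_def by auto
  from this(2) have "elementary_homotopy\<^sup>*\<^sup>* (p @ u) (q @ u)"
  proof (induction rule: rtranclp_induct)
    case (step y z)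
    then have "last y = last p" using elementary_homotopies_walks[OF step(1) \<open>walk p\<close>] by simp
    then show ?case using step(2,3) assms(2,3) elementary_homotopy_append_right[of y z u] by simp
  qed simp
  moreover have "walk (p @ u)" using assms \<open>walk p\<close> by (auto simp: walk_append)
  ultimately show ?thesis by (simp add: homotopic_walks_def)
qed

lemma homotopic_walks_append:
  "homotopic_walks p p' \<Longrightarrow> homotopic_walks q q' \<Longrightarrow> adj_or_eq (last p) (hd q) \<Longrightarrow>
     homotopic_walks (p @ q) (p' @ q')"
  by (metis homotopic_walks_append_left homotopic_walks_append_right homotopic_walks_walks
      homotopic_walks_trans)

lemma homotopic_walks_unstutter:
  "walk (u @ [v] @ w) \<Longrightarrow> homotopic_walks (u @ [v, v] @ w) (u @ [v] @ w)"
  using elementary_homotopy.unstutter elementary_homotopy_homotopic by blast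

lemma homotopic_walks_snoc_last: "walk xs \<Longrightarrow> homotopic_walks (xs @ [last xs]) xs"
  using homotopic_walks_unstutter[of "butlast xs" "last xs" "[]"]
  by (simp add: walk_def) (metis append_butlast_last_id append_assoc append_Cons append_Nil)

lemma homotopic_walks_Cons_hd: "walk xs \<Longrightarrow> homotopic_walks (hd xs # xs) xs"
  using homotopic_walks_unstutter[of "[]" "hd xs" "tl xs"] by (simp add: walk_def)

lemma homotopic_walks_join:
  assumes "walk p" "walk q" "last p = hd q"
  shows "homotopic_walks (p @ q) (p @ tl q)"
proof -
  obtain p' x where p: "p = p' @ [x]" using assms by (metis walk_def rev_exhaust)
  have q: "q = x # tl q" using assms p by (cases q) (auto simp: walk_def)
  have "walk (p' @ [x] @ tl q)" using assms p q
    by (cases "tl q") (auto simp: walk_def successively_append_iff successively_Cons)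
  then show ?thesis using homotopic_walks_unstutter[of p' x "tl q"] p q
    by (metis append.assoc append_Cons append_Nil)
qed

lemma homotopic_walks_replicate: "x \<in> W \<Longrightarrow> homotopic_walks (replicate (Suc k) x) [x]"
proof (induction k)
  case 0
  then show ?case by (simp add: homotopic_walks_refl walk_def)
next
  case (Suc k)
  have "successively adj_or_eq (replicate m x)" for m
    by (auto simp: successively_conv_nth)
  then have "walk (replicate (Suc k) x)"
    using Suc.prems by (simp add: walk_def del: replicate_Suc)
  then show ?case
    using homotopic_walks_Cons_hd Suc homotopic_walks_trans by fastforce
qed

lemma homotopic_walks_square:
  assumes "x \<in> W" "x' \<in> W" "y \<in> W"
    and "adj_or_eq x x'" "adj_or_eq x' y'" "adj_or_eq x y" "adj_or_eq y y'" and "walk (y' # w)"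
  shows "homotopic_walks (x # x' # y' # w) (x # y # y' # w)"
proof -
  have w1: "walk ([x, x'] @ [y'] @ w)" and w2: "walk ([x, x', y', y'] @ w)"
    and w3: "walk ([x, x, y, y'] @ w)" and w4: "walk ([] @ [x] @ y # y' # w)"
    using assms by (auto simp: walk_def)
  have "homotopic_walks (x # x' # y' # w) (x # x' # y' # y' # w)"
    using elementary_homotopy_homotopic[OF elementary_homotopy.stutter[OF w1]] by simp
  also have "homotopic_walks \<dots> (x # x # y # y' # w)"
  proof -
    have "list_all2 adj_or_eq ([x, x', y', y'] @ w) ([x, x, y, y'] @ w)"
      using assms adj_or_eq_sym by (intro list_all2_appendI) (auto simp: list_all2_refl)
    moreover have "last ([x, x', y', y'] @ w) = last ([x, x, y, y'] @ w)" by (cases w) auto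
    ultimately show ?thesis
      using elementary_homotopy_homotopic[OF elementary_homotopy.pointwise[OF w2 w3]] by simp
  qed
  also have "homotopic_walks \<dots> (x # y # y' # w)"
    using homotopic_walks_unstutter[OF w4] by simp
  finally show ?thesis .
qed

lemma homotopic_walks_ladder:
  "list_all2 adj_or_eq xs ys \<Longrightarrow> walk xs \<Longrightarrow> walk ys \<Longrightarrow>
     homotopic_walks (xs @ [last ys]) (hd xs # ys)"
proof (induction xs arbitrary: ys)
  case Nil
  then show ?case by (simp add: walk_def)
next
  case (Cons x xs')
  obtain y ys' where ys: "ys = y # ys'" using Cons(2) by (cases ys) auto
  show ?case
  proof (cases "xs' = []")
    case True
    then have "ys' = []" using Cons(2) ys by auto
    then show ?thesis using True ys Cons by (auto intro!: homotopic_walks_refl simp: walk_def)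
  next
    case False
    then obtain x' xs'' y' ys'' where xs': "xs' = x' # xs''" and ys': "ys' = y' # ys''"
      using Cons(2) ys by (cases xs'; cases ys') auto
    have "walk xs'" "walk ys'" using Cons(3,4) xs' ys ys' by (auto simp: walk_def)
    moreover have "list_all2 adj_or_eq xs' ys'" using Cons(2) ys by auto
    ultimately have IH: "homotopic_walks (xs' @ [last ys']) (x' # ys')"
      using Cons.IH xs' by simp
    have in_W: "x \<in> W" "x' \<in> W" "y \<in> W" using Cons(3,4) xs' ys by (auto simp: walk_def)
    have adj: "adj_or_eq x x'" "adj_or_eq x' y'" "adj_or_eq x y" "adj_or_eq y y'"
      using Cons(2-4) xs' ys ys' by (auto simp: walk_def)
    have "homotopic_walks (x # xs' @ [last ys]) (x # x' # ys')"
      using homotopic_walks_append_left[OF IH, of "[x]"] adj in_W xs' ys ys' by (simp add: walk_def)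
    also have "homotopic_walks (x # x' # ys') (x # ys)"
      using homotopic_walks_square[OF in_W adj] \<open>walk ys'\<close> ys ys' by simp
    finally show ?thesis by simp
  qed
qed

lemma grid_boundary_homotopic:
  fixes \<Psi> :: "nat \<Rightarrow> nat \<Rightarrow> 'v"
  assumes "\<And>i j. i \<le> a \<Longrightarrow> j \<le> b \<Longrightarrow> \<Psi> i j \<in> W"
    and "\<And>i j. i < a \<Longrightarrow> j \<le> b \<Longrightarrow> adj_or_eq (\<Psi> i j) (\<Psi> (Suc i) j)"
    and "\<And>i j. i \<le> a \<Longrightarrow> j < b \<Longrightarrow> adj_or_eq (\<Psi> i j) (\<Psi> i (Suc j))"
  shows "homotopic_walks (map (\<lambda>i. \<Psi> i 0) [0..<Suc a] @ map (\<lambda>j. \<Psi> a j) [0..<Suc b])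
           (map (\<lambda>j. \<Psi> 0 j) [0..<Suc b] @ map (\<lambda>i. \<Psi> i b) [0..<Suc a])"
  using assms
proof (induction b)
  case 0
  define R where "R = map (\<lambda>i. \<Psi> i 0) [0..<Suc a]"
  have wR: "walk R" unfolding R_def using 0 by (intro walk_map_upt) auto
  have "homotopic_walks (R @ [\<Psi> a 0]) R"
    using homotopic_walks_snoc_last[OF wR] by (simp add: R_def del: upt_Suc)
  also have "homotopic_walks R ([\<Psi> 0 0] @ R)"
    using homotopic_walks_sym[OF homotopic_walks_Cons_hd[OF wR]] by (simp add: R_def del: upt_Suc)
  finally show ?case by (simp add: R_def)
next
  case (Suc b)
  define R where "R j = map (\<lambda>i. \<Psi> i j) [0..<Suc a]" for j
  define C where "C i k = map (\<lambda>j. \<Psi> i j) [0..<Suc k]" for i k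
  have IH: "homotopic_walks (R 0 @ C a b) (C 0 b @ R b)"
    unfolding R_def C_def using Suc.IH Suc.prems by (simp del: upt_Suc)
  have wR: "walk (R j)" if "j \<le> Suc b" for j
    unfolding R_def using Suc.prems that by (intro walk_map_upt) auto
  have wC: "walk (C i k)" if "i \<le> a" "k \<le> Suc b" for i k
    unfolding C_def using Suc.prems that by (intro walk_map_upt) auto
  have C_Suc: "C i (Suc b) = C i b @ [\<Psi> i (Suc b)]" for i by (simp add: C_def)
  have R_Suc: "R (Suc b) = \<Psi> 0 (Suc b) # tl (R (Suc b))"
    unfolding R_def by (simp add: upt_conv_Cons del: upt_Suc)
  have rung: "homotopic_walks (R b @ [\<Psi> a (Suc b)]) (\<Psi> 0 b # R (Suc b))"
  proof -
    have "list_all2 adj_or_eq (R b) (R (Suc b))"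
      unfolding R_def using Suc.prems by (auto simp: list_all2_conv_all_nth simp del: upt_Suc)
    from homotopic_walks_ladder[OF this wR wR] show ?thesis by (simp add: R_def del: upt_Suc)
  qed
  have "homotopic_walks (R 0 @ C a (Suc b)) (C 0 b @ R b @ [\<Psi> a (Suc b)])"
    using homotopic_walks_append_right[OF IH, of "[\<Psi> a (Suc b)]"] Suc.prems C_Suc
    by (simp add: walk_def R_def C_def del: upt_Suc)
  also have "homotopic_walks \<dots> (C 0 b @ \<Psi> 0 b # R (Suc b))"
    using homotopic_walks_append_left[OF rung wC] by (simp add: R_def C_def del: upt_Suc)
  also have "homotopic_walks \<dots> (C 0 b @ R (Suc b))"
    using homotopic_walks_join[OF wC[of 0 b], of "\<Psi> 0 b # R (Suc b)"] homotopic_walks_walks[OF rung]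
    by (simp add: C_def del: upt_Suc)
  also have "homotopic_walks \<dots> (C 0 (Suc b) @ R (Suc b))"
  proof -
    have "last (C 0 (Suc b)) = hd (R (Suc b))" by (simp add: C_def R_def del: upt_Suc)
    then have "homotopic_walks (C 0 (Suc b) @ R (Suc b)) (C 0 (Suc b) @ tl (R (Suc b)))"
      using homotopic_walks_join wC wR by simp
    moreover have "C 0 (Suc b) @ tl (R (Suc b)) = C 0 b @ R (Suc b)"
      by (subst (2) R_Suc) (simp add: C_Suc)
    ultimately show ?thesis using homotopic_walks_sym by simp
  qed
  finally show ?case by (simp add: R_def C_def del: upt_Suc)
qed

lemma homotopic_walks_append_rev:
  assumes w: "walk q"
  shows "homotopic_walks (q @ rev q) [hd q]"
proof -
  define a where "a = length q - 1"
  have len: "length q = Suc a" using w by (simp add: walk_def a_def)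
  have in_W: "q ! k \<in> W" if "k < length q" for k using w that by (auto simp: walk_def)
  let ?\<Psi> = "\<lambda>i j. q ! min i (a - j)"
  have grid: "homotopic_walks (map (\<lambda>i. ?\<Psi> i 0) [0..<Suc a] @ map (\<lambda>j. ?\<Psi> a j) [0..<Suc a])
     (map (\<lambda>j. ?\<Psi> 0 j) [0..<Suc a] @ map (\<lambda>i. ?\<Psi> i a) [0..<Suc a])"
  proof (rule grid_boundary_homotopic)
    show "?\<Psi> i j \<in> W" if "i \<le> a" "j \<le> a" for i j using in_W len that by auto
    show "adj_or_eq (?\<Psi> i j) (?\<Psi> (Suc i) j)" if "i < a" "j \<le> a" for i j
      using walk_nth_adj[OF w] len that by (auto simp: min_def)
    show "adj_or_eq (?\<Psi> i j) (?\<Psi> i (Suc j))" if "i \<le> a" "j < a" for i j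
      using walk_nth_adj[OF w] len that Suc_diff_Suc[of j a] by (auto simp: min_def)
  qed
  have "map (\<lambda>i. ?\<Psi> i 0) [0..<Suc a] = q"
    by (rule nth_equalityI) (auto simp: len simp del: upt_Suc)
  moreover have "map (\<lambda>j. ?\<Psi> a j) [0..<Suc a] = rev q"
    by (rule nth_equalityI) (auto simp: len rev_nth simp del: upt_Suc)
  moreover have "map (\<lambda>j. ?\<Psi> 0 j) [0..<Suc a] = replicate (Suc a) (q ! 0)"
    by (rule nth_equalityI) (auto simp del: upt_Suc replicate_Suc)
  moreover have "map (\<lambda>i. ?\<Psi> i a) [0..<Suc a] = replicate (Suc a) (q ! 0)"
    by (rule nth_equalityI) (auto simp del: upt_Suc replicate_Suc)
  ultimately have "homotopic_walks (q @ rev q) (replicate (Suc (Suc a + a)) (q ! 0))"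
    using grid by (simp add: replicate_add[symmetric] del: replicate_Suc upt_Suc)
  also have "homotopic_walks \<dots> [q ! 0]"
    using in_W len by (intro homotopic_walks_replicate) auto
  finally show ?thesis using w by (simp add: hd_conv_nth walk_def)
qed

section \<open>Walks and based loops\<close>

lemma based_loop_altdef:
  "based_loop W A x0 f \<longleftrightarrow> (\<forall>i. f i \<in> W) \<and> (\<forall>i. adj_or_eq (f i) (f (i + 1))) \<and>
     (\<exists>N::nat. \<forall>i. int N \<le> \<bar>i\<bar> \<longrightarrow> f i = x0)"
  by (simp add: based_loop_def adj_or_eq_def)

lemma based_homotopic_altdef:
  "based_homotopic W A x0 f g \<longleftrightarrow>
     (\<exists>(m::nat) h. (\<forall>j\<le>m. based_loop W A x0 (\<lambda>i. h i j)) \<and>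
        (\<forall>i. \<forall>j<m. adj_or_eq (h i j) (h i (Suc j))) \<and> (\<forall>i. h i 0 = f i) \<and> (\<forall>i. h i m = g i))"
  by (simp add: based_homotopic_def adj_or_eq_def)

lemma based_homotopic_refl: "based_loop W A x0 f \<Longrightarrow> based_homotopic W A x0 f f"
  unfolding based_homotopic_def by (rule exI[of _ 0], rule exI[of _ "\<lambda>i j. f i"]) auto

lemma based_homotopic_adjacent:
  "based_loop W A x0 f \<Longrightarrow> based_loop W A x0 g \<Longrightarrow> (\<And>i. adj_or_eq (f i) (g i)) \<Longrightarrow>
     based_homotopic W A x0 f g"
  unfolding based_homotopic_altdef
  by (rule exI[of _ 1], rule exI[of _ "\<lambda>i j. if j = 0 then f i else g i"]) (auto simp: le_Suc_eq)

lemma based_homotopic_sym: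
  assumes "based_homotopic W A x0 f g"
  shows "based_homotopic W A x0 g f"
proof -
  obtain m h where h: "\<forall>j\<le>m. based_loop W A x0 (\<lambda>i. h i j)"
    "\<forall>i. \<forall>j<m. adj_or_eq (h i j) (h i (Suc j))" "\<forall>i. h i 0 = f i" "\<forall>i. h i m = g i"
    using assms unfolding based_homotopic_altdef by blast
  have "adj_or_eq (h i (m - j)) (h i (m - Suc j))" if "j < m" for i j
  proof -
    have "adj_or_eq (h i (m - Suc j)) (h i (Suc (m - Suc j)))" using h(2) that by auto
    then show ?thesis using Suc_diff_Suc[OF that] by (simp add: adj_or_eq_commute)
  qed
  then show ?thesis unfolding based_homotopic_altdef
    by (intro exI[of _ m] exI[of _ "\<lambda>i j. h i (m - j)"]) (use h in auto)
qed

lemma based_homotopic_trans [trans]: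
  assumes "based_homotopic W A x0 f g" "based_homotopic W A x0 g k"
  shows "based_homotopic W A x0 f k"
proof -
  obtain m1 h1 where h1: "\<forall>j\<le>m1. based_loop W A x0 (\<lambda>i. h1 i j)"
    "\<forall>i. \<forall>j<m1. adj_or_eq (h1 i j) (h1 i (Suc j))" "\<forall>i. h1 i 0 = f i" "\<forall>i. h1 i m1 = g i"
    using assms(1) unfolding based_homotopic_altdef by blast
  obtain m2 h2 where h2: "\<forall>j\<le>m2. based_loop W A x0 (\<lambda>i. h2 i j)"
    "\<forall>i. \<forall>j<m2. adj_or_eq (h2 i j) (h2 i (Suc j))" "\<forall>i. h2 i 0 = g i" "\<forall>i. h2 i m2 = k i"
    using assms(2) unfolding based_homotopic_altdef by blast
  define h where "h i j = (if j \<le> m1 then h1 i j else h2 i (j - m1))" for i j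
  have "adj_or_eq (h i j) (h i (Suc j))" if "j < m1 + m2" for i j
  proof -
    consider "j < m1" | "j = m1" | "m1 < j" by linarith
    then show ?thesis
    proof cases
      case 2
      then show ?thesis using h1(4) h2(3) h2(2)[rule_format, of 0 i] that by (auto simp: h_def)
    next
      case 3
      then have "Suc j - m1 = Suc (j - m1)" "j - m1 < m2" using that by arith+
      then show ?thesis using h2(2) 3 by (auto simp: h_def)
    qed (use h1(2) in \<open>auto simp: h_def\<close>)
  qed
  moreover have "based_loop W A x0 (\<lambda>i. h i j)" if "j \<le> m1 + m2" for j
    using h1(1) h2(1) that by (cases "j \<le> m1") (auto simp: h_def)
  ultimately show ?thesis unfolding based_homotopic_altdef
    by (intro exI[of _ "m1 + m2"] exI[of _ h]) (use h1 h2 in \<open>auto simp: h_def\<close>)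
qed

definition loop_of_walk :: "'v \<Rightarrow> 'v list \<Rightarrow> int \<Rightarrow> 'v" where
  "loop_of_walk x0 xs i = (if 0 \<le> i \<and> i < int (length xs) then xs ! nat i else x0)"

lemma based_loop_of_walk:
  assumes x0: "x0 \<in> W" and w: "walk xs" and hd: "hd xs = x0" and last: "last xs = x0"
  shows "based_loop W A x0 (loop_of_walk x0 xs)"
  unfolding based_loop_altdef
proof (intro conjI allI)
  fix i
  show "loop_of_walk x0 xs i \<in> W" using x0 w by (auto simp: loop_of_walk_def walk_def)
  have ne: "xs \<noteq> []" using w by (simp add: walk_def)
  consider "0 \<le> i \<and> i + 1 < int (length xs)" | "i = -1" | "i = int (length xs) - 1"
    | "i < -1 \<or> int (length xs) \<le> i" by linarith
  then show "adj_or_eq (loop_of_walk x0 xs i) (loop_of_walk x0 xs (i + 1))"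
  proof cases
    case 1
    then have "nat (i + 1) = Suc (nat i)" by auto
    then show ?thesis using 1 successively_nth[of adj_or_eq xs "nat i"] w
      by (auto simp: loop_of_walk_def walk_def)
  next
    case 2
    then show ?thesis using hd ne by (auto simp: loop_of_walk_def hd_conv_nth)
  next
    case 3
    then have "nat i = length xs - 1" by auto
    then show ?thesis using 3 last ne by (auto simp: loop_of_walk_def last_conv_nth)
  qed (auto simp: loop_of_walk_def)
next
  show "\<exists>N::nat. \<forall>i. int N \<le> \<bar>i\<bar> \<longrightarrow> loop_of_walk x0 xs i = x0"
    by (rule exI[of _ "length xs"]) (auto simp: loop_of_walk_def)
qed

lemma based_homotopic_loop_of_stutter:
  assumes x0: "x0 \<in> W" and w: "walk (u @ [v] @ w)"
    and hd: "hd (u @ [v] @ w) = x0" and last: "last (u @ [v] @ w) = x0"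
  shows "based_homotopic W A x0 (loop_of_walk x0 (u @ [v] @ w)) (loop_of_walk x0 (u @ [v, v] @ w))"
proof -
  let ?xs = "u @ [v] @ w" and ?ys = "u @ [v, v] @ w"
  have "walk ?ys" "hd ?ys = x0" "last ?ys = x0"
    using elementary_homotopy_walks[OF elementary_homotopy.stutter[OF w]] hd last by auto
  then have ys: "based_loop W A x0 (loop_of_walk x0 ?ys)" using based_loop_of_walk x0 by blast
  have xs: "based_loop W A x0 (loop_of_walk x0 ?xs)" using based_loop_of_walk x0 w hd last by blast
  have shift: "loop_of_walk x0 ?ys i =
      (if i \<le> int (length u) then loop_of_walk x0 ?xs i else loop_of_walk x0 ?xs (i - 1))" for i
  proof (cases "i \<le> int (length u)")
    case False
    then have "nat i - length u = Suc (nat (i - 1) - length u)" "length u \<le> nat (i - 1)" by auto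
    then show ?thesis using False by (auto simp: loop_of_walk_def nth_append)
  qed (auto simp: loop_of_walk_def nth_append)
  show ?thesis
  proof (rule based_homotopic_adjacent[OF xs ys])
    fix i
    have "adj_or_eq (loop_of_walk x0 ?xs (i - 1)) (loop_of_walk x0 ?xs (i - 1 + 1))"
      using xs by (simp only: based_loop_altdef)
    then show "adj_or_eq (loop_of_walk x0 ?xs i) (loop_of_walk x0 ?ys i)"
      using shift[of i] adj_or_eq_sym by auto
  qed
qed

lemma elementary_homotopy_based_homotopic:
  "elementary_homotopy xs ys \<Longrightarrow> x0 \<in> W \<Longrightarrow> hd xs = x0 \<Longrightarrow> last xs = x0 \<Longrightarrow>
     based_homotopic W A x0 (loop_of_walk x0 xs) (loop_of_walk x0 ys)"
proof (induction rule: elementary_homotopy.induct)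
  case (pointwise xs ys)
  then show ?case
    by (intro based_homotopic_adjacent based_loop_of_walk)
      (auto simp: loop_of_walk_def list_all2_conv_all_nth)
next
  case (stutter u v w)
  then show ?case using based_homotopic_loop_of_stutter by blast
next
  case (unstutter u v w)
  have "hd (u @ [v] @ w) = x0" "last (u @ [v] @ w) = x0" using unstutter
    by (cases u; cases w; auto)+
  then show ?case using based_homotopic_loop_of_stutter[of x0 u v w] unstutter based_homotopic_sym
    by blast
qed

lemma homotopic_walks_based_homotopic:
  assumes "homotopic_walks xs ys" "x0 \<in> W" "hd xs = x0" "last xs = x0"
  shows "based_homotopic W A x0 (loop_of_walk x0 xs) (loop_of_walk x0 ys)"
proof -
  have "walk xs" "elementary_homotopy\<^sup>*\<^sup>* xs ys" using assms(1) homotopic_walks_def by auto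
  from this(2) show ?thesis
  proof (induction rule: rtranclp_induct)
    case base
    then show ?case using based_homotopic_refl based_loop_of_walk assms \<open>walk xs\<close> by blast
  next
    case (step y z)
    then have "hd y = x0" "last y = x0"
      using elementary_homotopies_walks[OF step(1) \<open>walk xs\<close>] assms by auto
    then show ?case
      using step(2,3) elementary_homotopy_based_homotopic assms(2) based_homotopic_trans by blast
  qed
qed

lemma based_loop_shift:
  assumes "based_loop W A x0 f"
  shows "based_loop W A x0 (\<lambda>i. f (i + c))"
proof -
  obtain N :: nat where N: "\<forall>i. int N \<le> \<bar>i\<bar> \<longrightarrow> f i = x0"
    using assms by (auto simp: based_loop_def)
  have "\<forall>i. int (N + nat \<bar>c\<bar>) \<le> \<bar>i\<bar> \<longrightarrow> f (i + c) = x0" using N by (auto intro!: N[rule_format])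
  moreover have "\<forall>i. adj_or_eq (f (i + c)) (f (i + 1 + c))"
    using assms unfolding based_loop_altdef by (metis add.commute add.left_commute)
  ultimately show ?thesis using assms unfolding based_loop_altdef by blast
qed

lemma based_homotopic_shift:
  assumes "based_loop W A x0 f"
  shows "based_homotopic W A x0 f (\<lambda>i. f (i - int k))"
proof (induction k)
  case 0
  then show ?case using based_homotopic_refl assms by simp
next
  case (Suc k)
  have shift: "based_loop W A x0 (\<lambda>i. f (i - c))" for c
    using based_loop_shift[OF assms, of "- c"] by simp
  have "based_homotopic W A x0 (\<lambda>i. f (i - int k)) (\<lambda>i. f (i - int (Suc k)))"
  proof (rule based_homotopic_adjacent[OF shift shift])
    fix i
    have "adj_or_eq (f (i - int (Suc k))) (f (i - int (Suc k) + 1))"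
      using assms unfolding based_loop_altdef by blast
    then show "adj_or_eq (f (i - int k)) (f (i - int (Suc k)))" by (simp add: adj_or_eq_commute)
  qed
  with Suc show ?case by (rule based_homotopic_trans)
qed

lemma based_loop_radius:
  assumes "based_loop W A x0 f" and "int (loop_radius x0 f) \<le> \<bar>i\<bar>"
  shows "f i = x0"
proof -
  have "\<exists>N::nat. \<forall>i. int N \<le> \<bar>i\<bar> \<longrightarrow> f i = x0" using assms(1) by (simp add: based_loop_def)
  then have "\<forall>i. int (loop_radius x0 f) \<le> \<bar>i\<bar> \<longrightarrow> f i = x0"
    unfolding loop_radius_def by (rule LeastI_ex)
  with assms(2) show ?thesis by blast
qed

definition walk_of_loop :: "'v \<Rightarrow> (int \<Rightarrow> 'v) \<Rightarrow> 'v list" where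
  "walk_of_loop x0 f =
     map (\<lambda>k. f (int k - int (loop_radius x0 f))) [0..<Suc (2 * loop_radius x0 f)]"

lemma length_walk_of_loop: "length (walk_of_loop x0 f) = Suc (2 * loop_radius x0 f)"
  by (simp add: walk_of_loop_def)

lemma nth_walk_of_loop:
  "k < Suc (2 * loop_radius x0 f) \<Longrightarrow> walk_of_loop x0 f ! k = f (int k - int (loop_radius x0 f))"
  by (simp add: walk_of_loop_def del: upt_Suc)

lemma walk_of_loop:
  assumes "based_loop W A x0 f"
  shows "walk (walk_of_loop x0 f)" "hd (walk_of_loop x0 f) = x0" "last (walk_of_loop x0 f) = x0"
proof -
  let ?r = "loop_radius x0 f"
  show "walk (walk_of_loop x0 f)" unfolding walk_of_loop_def
  proof (rule walk_map_upt)
    fix i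
    show "f (int i - int ?r) \<in> W" using assms by (simp add: based_loop_def)
    have "adj_or_eq (f (int i - int ?r)) (f (int i - int ?r + 1))"
      using assms unfolding based_loop_altdef by blast
    then show "adj_or_eq (f (int i - int ?r)) (f (int (Suc i) - int ?r))"
      by (simp add: algebra_simps)
  qed
  show "hd (walk_of_loop x0 f) = x0" "last (walk_of_loop x0 f) = x0"
    using based_loop_radius[OF assms, of "- int ?r"] based_loop_radius[OF assms, of "int ?r"]
    by (simp_all add: walk_of_loop_def del: upt_Suc)
qed

lemma loop_concat_eq_shifted:
  assumes f: "based_loop W A x0 f" and g: "based_loop W A x0 g"
  shows "loop_concat x0 f g i =
    loop_of_walk x0 (walk_of_loop x0 f @ tl (walk_of_loop x0 g)) (i + 2 * int (loop_radius x0 f))"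
proof -
  define rf where "rf = loop_radius x0 f"
  define rg where "rg = loop_radius x0 g"
  let ?L = "walk_of_loop x0 f @ tl (walk_of_loop x0 g)"
  have lf: "length (walk_of_loop x0 f) = Suc (2 * rf)" by (simp add: length_walk_of_loop rf_def)
  have lg: "length (tl (walk_of_loop x0 g)) = 2 * rg" by (simp add: length_walk_of_loop rg_def)
  have nf: "walk_of_loop x0 f ! k = f (int k - int rf)" if "k < Suc (2 * rf)" for k
    using nth_walk_of_loop that rf_def by blast
  have ng: "tl (walk_of_loop x0 g) ! k = g (int k + 1 - int rg)" if "k < 2 * rg" for k
    using nth_walk_of_loop[of _ x0 g] that
      by (simp add: rg_def nth_tl length_walk_of_loop algebra_simps)
  define j where "j = i + 2 * int rf"
  have concat: "loop_concat x0 f g i = (if i \<le> 0 then f (i + int rf) else g (i - int rg))"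
    by (simp add: loop_concat_def rf_def rg_def)
  consider "i \<le> 0" "j < 0" | "i \<le> 0" "0 \<le> j" | "0 < i" "i \<le> 2 * int rg" | "2 * int rg < i"
    by linarith
  then have "loop_concat x0 f g i = loop_of_walk x0 ?L j"
  proof cases
    case 1
    then have "int rf \<le> \<bar>i + int rf\<bar>" by (simp add: j_def)
    then show ?thesis using 1 based_loop_radius[OF f] concat
      by (simp add: loop_of_walk_def rf_def)
  next
    case 2
    then have "nat j < Suc (2 * rf)" "int (nat j) = j" by (auto simp: j_def)
    then show ?thesis using 2 lf nf concat
      by (simp add: loop_of_walk_def nth_append j_def add.commute)
  next
    case 3
    then have "nat j \<ge> Suc (2 * rf)" "nat j - Suc (2 * rf) < 2 * rg"
      "int (nat j - Suc (2 * rf)) = i - 1" "int (nat j) = j"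
      by (auto simp: j_def)
    then show ?thesis using 3 lf lg ng concat by (auto simp: loop_of_walk_def nth_append)
  next
    case 4
    then show ?thesis using lf lg based_loop_radius[OF g, of "i - int rg"] concat
      by (auto simp: loop_of_walk_def j_def rg_def)
  qed
  then show ?thesis by (simp add: j_def rf_def)
qed

lemma loop_concat_homotopic_walk_append:
  assumes x0: "x0 \<in> W" and f: "based_loop W A x0 f" and g: "based_loop W A x0 g"
  shows "based_homotopic W A x0 (loop_concat x0 f g)
           (loop_of_walk x0 (walk_of_loop x0 f @ walk_of_loop x0 g))"
proof -
  let ?Lf = "walk_of_loop x0 f" and ?Lg = "walk_of_loop x0 g"
  let ?s = "int (2 * loop_radius x0 f)"
  have join: "homotopic_walks (?Lf @ ?Lg) (?Lf @ tl ?Lg)"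
    using homotopic_walks_join walk_of_loop[OF f] walk_of_loop[OF g] by simp
  have ends: "hd (?Lf @ ?Lg) = x0" "last (?Lf @ ?Lg) = x0"
    using walk_of_loop[OF f] walk_of_loop[OF g] by (auto simp: walk_def)
  have concat: "loop_concat x0 f g = (\<lambda>i. loop_of_walk x0 (?Lf @ tl ?Lg) (i + ?s))"
    using loop_concat_eq_shifted[OF f g] by auto
  have "based_loop W A x0 (loop_of_walk x0 (?Lf @ tl ?Lg))"
    using based_loop_of_walk[OF x0] homotopic_walks_walks[OF join] ends by auto
  then have "based_loop W A x0 (loop_concat x0 f g)"
    unfolding concat by (rule based_loop_shift)
  then have "based_homotopic W A x0 (loop_concat x0 f g) (\<lambda>i. loop_concat x0 f g (i - ?s))"
    by (rule based_homotopic_shift)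
  also have "(\<lambda>i. loop_concat x0 f g (i - ?s)) = loop_of_walk x0 (?Lf @ tl ?Lg)"
    unfolding concat by simp
  also have "based_homotopic W A x0 \<dots> (loop_of_walk x0 (?Lf @ ?Lg))"
    using based_homotopic_sym homotopic_walks_based_homotopic[OF join x0 ends] by blast
  finally show ?thesis .
qed

lemma A1_representative:
  assumes "X \<in> carrier (A1 W A x0)"
  shows "(SOME f. f \<in> X) \<in> X" and "based_loop W A x0 (SOME f. f \<in> X)"
proof -
  obtain f where "X = loop_class W A x0 f" "based_loop W A x0 f"
    using assms by (auto simp: A1_def)
  then have "f \<in> X" using based_homotopic_refl by (auto simp: loop_class_def)
  then show "(SOME f. f \<in> X) \<in> X" by (rule someI[where P = "\<lambda>f. f \<in> X"])
  then show "based_loop W A x0 (SOME f. f \<in> X)"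
    using \<open>X = loop_class W A x0 f\<close> by (auto simp: loop_class_def)
qed

lemma loop_class_eqI:
  "based_homotopic W A x0 f g \<Longrightarrow> loop_class W A x0 f = loop_class W A x0 g"
  unfolding loop_class_def using based_homotopic_trans based_homotopic_sym by blast

end

section \<open>Products of walks in reduced powers\<close>

lemma reduced_power_adj_sym:
  assumes "simple_graph V E" and "reduced_power_adj E M M'"
  shows "reduced_power_adj E M' M"
proof -
  obtain v w where "v \<in># M" "E v w" "M' = M - {#v#} + {#w#}"
    using assms(2) by (auto simp: reduced_power_adj_def)
  moreover have "E w v" using assms(1) \<open>E v w\<close> by (auto simp: simple_graph_def)
  ultimately show ?thesis unfolding reduced_power_adj_def
    by (intro exI[of _ w] exI[of _ v]) auto
qed

lemma reduced_power_adj_add: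
  assumes "reduced_power_adj E M M'"
  shows "reduced_power_adj E (M + C) (M' + C)"
proof -
  obtain v w where "v \<in># M" "E v w" "M' = M - {#v#} + {#w#}"
    using assms by (auto simp: reduced_power_adj_def)
  moreover obtain M0 where "M = add_mset v M0" using \<open>v \<in># M\<close> by (metis multi_member_split)
  ultimately show ?thesis unfolding reduced_power_adj_def
    by (intro exI[of _ v] exI[of _ w]) simp
qed

locale reduced_power =
  fixes V :: "'a set" and E :: "'a \<Rightarrow> 'a \<Rightarrow> bool" and n :: nat
  assumes simple: "simple_graph V E"
begin

lemma power_graph: "symmetric_graph (reduced_power_adj E)"
  using reduced_power_adj_sym simple by unfold_locales

sublocale symmetric_graph "reduced_power_verts V n" "reduced_power_adj E"
  by (rule power_graph)

sublocale G: symmetric_graph V E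
  using simple by unfold_locales (auto simp: simple_graph_def)

abbreviation power_walk :: "nat \<Rightarrow> 'a multiset list \<Rightarrow> bool" where
  "power_walk k \<equiv> symmetric_graph.walk (reduced_power_verts V k) (reduced_power_adj E)"

lemma power_walk_iff:
  "power_walk k P \<longleftrightarrow>
     P \<noteq> [] \<and> (\<forall>M\<in>set P. set_mset M \<subseteq> V \<and> size M = k) \<and> successively adj_or_eq P"
  by (auto simp: symmetric_graph.walk_def[OF power_graph] reduced_power_verts_def)

text \<open>The product of two walks in complementary reduced powers is a grid.\<close>

lemma product_square:
  assumes P: "power_walk k P" and Q: "power_walk l Q" and kl: "k + l = n"
  shows "homotopic_walks (map (\<lambda>M. M + hd Q) P @ map (\<lambda>N. last P + N) Q)
           (map (\<lambda>N. hd P + N) Q @ map (\<lambda>M. M + last Q) P)"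
proof -
  define a where "a = length P - 1"
  define b where "b = length Q - 1"
  have P': "P \<noteq> []" "\<forall>M\<in>set P. set_mset M \<subseteq> V \<and> size M = k" "successively adj_or_eq P"
    and Q': "Q \<noteq> []" "\<forall>N\<in>set Q. set_mset N \<subseteq> V \<and> size N = l" "successively adj_or_eq Q"
    using P Q by (simp_all add: power_walk_iff)
  have lP: "length P = Suc a" and lQ: "length Q = Suc b"
    using P'(1) Q'(1) by (simp_all add: a_def b_def)
  have grid: "homotopic_walks
      (map (\<lambda>i. P ! i + Q ! 0) [0..<Suc a] @ map (\<lambda>j. P ! a + Q ! j) [0..<Suc b])
      (map (\<lambda>j. P ! 0 + Q ! j) [0..<Suc b] @ map (\<lambda>i. P ! i + Q ! b) [0..<Suc a])"
  proof (rule grid_boundary_homotopic)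
    show "P ! i + Q ! j \<in> reduced_power_verts V n" if "i \<le> a" "j \<le> b" for i j
      using P'(2) Q'(2) kl that lP lQ unfolding reduced_power_verts_def
      by (auto dest!: nth_mem[of i P] nth_mem[of j Q])
    show "adj_or_eq (P ! i + Q ! j) (P ! Suc i + Q ! j)" if "i < a" "j \<le> b" for i j
      using successively_nth[of adj_or_eq P i] P'(3) that lP
        reduced_power_adj_add[of E "P ! i" "P ! Suc i" "Q ! j"]
      by (auto simp: adj_or_eq_def)
    show "adj_or_eq (P ! i + Q ! j) (P ! i + Q ! Suc j)" if "i \<le> a" "j < b" for i j
      using successively_nth[of adj_or_eq Q j] Q'(3) that lQ
        reduced_power_adj_add[of E "Q ! j" "Q ! Suc j" "P ! i"]
      by (auto simp: adj_or_eq_def add.commute)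
  qed
  have "map (\<lambda>i. P ! i + Q ! 0) [0..<Suc a] = map (\<lambda>M. M + hd Q) P"
    "map (\<lambda>j. P ! a + Q ! j) [0..<Suc b] = map (\<lambda>N. last P + N) Q"
    "map (\<lambda>j. P ! 0 + Q ! j) [0..<Suc b] = map (\<lambda>N. hd P + N) Q"
    "map (\<lambda>i. P ! i + Q ! b) [0..<Suc a] = map (\<lambda>M. M + last Q) P"
    by (auto intro!: nth_equalityI simp: lP lQ hd_conv_nth last_conv_nth P'(1) Q'(1)
        simp del: upt_Suc)
  then show ?thesis using grid by simp
qed

definition token_walk :: "'a multiset \<Rightarrow> 'a list \<Rightarrow> 'a multiset list" where
  "token_walk S c = map (\<lambda>u. add_mset u S) c"

lemma token_walk_eq_Nil_iff [simp]: "token_walk S c = [] \<longleftrightarrow> c = []"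
  by (simp add: token_walk_def)

lemma hd_token_walk: "c \<noteq> [] \<Longrightarrow> hd (token_walk S c) = add_mset (hd c) S"
  by (simp add: token_walk_def hd_map)

lemma last_token_walk: "c \<noteq> [] \<Longrightarrow> last (token_walk S c) = add_mset (last c) S"
  by (simp add: token_walk_def last_map)

lemma token_walk_append: "token_walk S (c @ d) = token_walk S c @ token_walk S d"
  by (simp add: token_walk_def)

lemma token_walk_rev: "token_walk S (rev c) = rev (token_walk S c)"
  by (simp add: token_walk_def rev_map)

lemma map_add_token_walk: "map (\<lambda>M. M + C) (token_walk S c) = token_walk (S + C) c"
  by (simp add: token_walk_def)

lemma map_add_mset_token_walk: "map (add_mset u) (token_walk S c) = token_walk (add_mset u S) c"
  by (simp add: token_walk_def add_mset_commute)

lemma power_walk_token_walk: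
  assumes "G.walk c" "set_mset S \<subseteq> V"
  shows "power_walk (Suc (size S)) (token_walk S c)"
proof -
  have "successively adj_or_eq (token_walk S c)"
    using assms(1) unfolding G.walk_def token_walk_def
    by (auto simp: successively_map G.adj_or_eq_def adj_or_eq_def reduced_power_adj_def
        elim!: successively_mono)
  then show ?thesis using assms by (auto simp: power_walk_iff G.walk_def token_walk_def)
qed

lemma token_walk_commute:
  assumes P: "power_walk k P" and c: "G.walk c" and n: "Suc k = n"
  shows "homotopic_walks (map (add_mset (hd c)) P @ token_walk (last P) c)
           (token_walk (hd P) c @ map (add_mset (last c)) P)"
proof -
  have "power_walk 1 (token_walk {#} c)"
    using power_walk_token_walk[OF c, of "{#}"] by simp
  from product_square[OF P this] n have "homotopic_walks
      (map (\<lambda>M. M + hd (token_walk {#} c)) P @ map (\<lambda>N. last P + N) (token_walk {#} c))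
      (map (\<lambda>N. hd P + N) (token_walk {#} c) @ map (\<lambda>M. M + last (token_walk {#} c)) P)"
    by simp
  moreover have "c \<noteq> []" using c by (simp add: G.walk_def)
  then have "hd (token_walk {#} c) = {#hd c#}" "last (token_walk {#} c) = {#last c#}"
    by (simp_all add: hd_token_walk last_token_walk)
  moreover have "map (\<lambda>N. M + N) (token_walk {#} c) = token_walk M c" for M
    by (simp add: token_walk_def)
  ultimately show ?thesis by simp
qed

end

section \<open>Moving tokens out of a root\<close>

locale rooted_reduced_power = reduced_power +
  fixes a :: 'a
  assumes connected: "connected_graph V E" and root_in_V: "a \<in> V"
begin

lemma graph_walk_of_rtranclp:
  "E\<^sup>*\<^sup>* x y \<Longrightarrow> x \<in> V \<Longrightarrow> \<exists>c. G.walk c \<and> hd c = x \<and> last c = y"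
proof (induction rule: rtranclp_induct)
  case base
  then show ?case by (intro exI[of _ "[x]"]) (auto simp: G.walk_def)
next
  case (step y z)
  then obtain c where c: "G.walk c" "hd c = x" "last c = y" by blast
  have "z \<in> V" using step(2) simple by (auto simp: simple_graph_def)
  then have "G.walk (c @ [z])" using c step(2)
    by (auto simp: G.walk_def G.adj_or_eq_def successively_append_iff)
  then show ?case using c by (intro exI[of _ "c @ [z]"]) (auto simp: G.walk_def)
qed

definition chosen_path :: "'a \<Rightarrow> 'a list" where
  "chosen_path v = (SOME c. G.walk c \<and> hd c = a \<and> last c = v \<and> (v = a \<longrightarrow> c = [a]))"

lemma chosen_path:
  assumes "v \<in> V"
  shows "G.walk (chosen_path v)" "hd (chosen_path v) = a" "last (chosen_path v) = v"
    and "chosen_path v \<noteq> []"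
proof -
  have "\<exists>c. G.walk c \<and> hd c = a \<and> last c = v \<and> (v = a \<longrightarrow> c = [a])"
  proof (cases "v = a")
    case True
    then show ?thesis using root_in_V by (intro exI[of _ "[a]"]) (auto simp: G.walk_def)
  next
    case False
    then show ?thesis
      using graph_walk_of_rtranclp[of a v] assms connected root_in_V
        by (auto simp: connected_graph_def)
  qed
  then have "G.walk (chosen_path v) \<and> hd (chosen_path v) = a \<and> last (chosen_path v) = v"
    unfolding chosen_path_def by (rule someI2_ex) blast
  then show "G.walk (chosen_path v)" "hd (chosen_path v) = a" "last (chosen_path v) = v"
    "chosen_path v \<noteq> []" by (auto simp: G.walk_def)
qed

lemma chosen_path_root: "chosen_path a = [a]"
proof -
  have "\<exists>c. G.walk c \<and> hd c = a \<and> last c = a \<and> (a = a \<longrightarrow> c = [a])"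
    using root_in_V by (intro exI[of _ "[a]"]) (auto simp: G.walk_def)
  then show ?thesis unfolding chosen_path_def by (rule someI2_ex) blast
qed

lemma chosen_loop:
  assumes "E v w"
  shows "G.walk (chosen_path v @ rev (chosen_path w))"
    and "hd (chosen_path v @ rev (chosen_path w)) = a"
      "last (chosen_path v @ rev (chosen_path w)) = a"
proof -
  have "v \<in> V" "w \<in> V" using assms simple by (auto simp: simple_graph_def)
  then show "G.walk (chosen_path v @ rev (chosen_path w))"
    "hd (chosen_path v @ rev (chosen_path w)) = a" "last (chosen_path v @ rev (chosen_path w)) = a"
    using chosen_path[of v] chosen_path[of w] assms
    by (auto simp: G.walk_append G.walk_rev hd_rev last_rev G.adj_or_eq_def)
qed

text \<open>Starting with the tokens of \<open>L\<close> all at the root, \<open>disperse B L\<close> moves them, last entry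
  first, along chosen paths to the entries of \<open>L\<close>, while the tokens of \<open>B\<close> stay put.\<close>

fun disperse :: "'a multiset \<Rightarrow> 'a list \<Rightarrow> 'a multiset list" where
  "disperse B [] = [B]"
| "disperse B (y # L) = disperse (add_mset a B) L @ token_walk (B + mset L) (chosen_path y)"

lemma disperse_ne [simp]: "disperse B L \<noteq> []"
  by (induction L arbitrary: B) auto

lemma hd_disperse: "hd (disperse B L) = B + replicate_mset (length L) a"
  by (induction L arbitrary: B) auto

lemma last_disperse: "set L \<subseteq> V \<Longrightarrow> last (disperse B L) = B + mset L"
  by (induction L arbitrary: B) (auto simp: last_token_walk chosen_path)

lemma power_walk_disperse:
  "set L \<subseteq> V \<Longrightarrow> set_mset B \<subseteq> V \<Longrightarrow> power_walk (size B + length L) (disperse B L)"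
proof (induction L arbitrary: B)
  case Nil
  then show ?case by (simp add: power_walk_iff)
next
  case (Cons y L)
  have "power_walk (size B + length (y # L)) (disperse (add_mset a B) L)"
    using Cons.IH[of "add_mset a B"] Cons.prems root_in_V by simp
  moreover have "power_walk (size B + length (y # L)) (token_walk (B + mset L) (chosen_path y))"
    using power_walk_token_walk[of "chosen_path y" "B + mset L"] Cons.prems chosen_path by simp
  moreover have "last (disperse (add_mset a B) L) = hd (token_walk (B + mset L) (chosen_path y))"
    using Cons.prems by (simp add: last_disperse hd_token_walk chosen_path)
  ultimately show ?case
    by (simp add: symmetric_graph.walk_append[OF power_graph] symmetric_graph.adj_or_eq_refl[OF
      power_graph])
qed

lemma walk_disperse:
  "set L \<subseteq> V \<Longrightarrow> set_mset B \<subseteq> V \<Longrightarrow> size B + length L = n \<Longrightarrow> walk (disperse B L)"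
  using power_walk_disperse by auto

lemma disperse_add: "disperse (B + C) L = map (\<lambda>M. M + C) (disperse B L)"
proof (induction L arbitrary: B)
  case (Cons y L)
  from Cons.IH[of "add_mset a B"] show ?case by (simp add: map_add_token_walk ac_simps)
qed simp

lemma walk_token_walk:
  "G.walk c \<Longrightarrow> set_mset S \<subseteq> V \<Longrightarrow> Suc (size S) = n \<Longrightarrow> walk (token_walk S c)"
  using power_walk_token_walk by auto

lemma disperse_swap:
  assumes "set (y # z # L) \<subseteq> V" "set_mset B \<subseteq> V" "size B + length L + 2 = n"
  shows "homotopic_walks (disperse B (y # z # L)) (disperse B (z # y # L))"
proof -
  define S where "S = B + mset L"
  have "y \<in> V" "z \<in> V" "set_mset S \<subseteq> V" using assms by (auto simp: S_def)
  have "power_walk (Suc (size S)) (token_walk S (chosen_path z))"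
    using \<open>z \<in> V\<close> \<open>set_mset S \<subseteq> V\<close> by (intro power_walk_token_walk chosen_path)
  from token_walk_commute[OF this chosen_path(1)[OF \<open>y \<in> V\<close>]] assms(3)
  have "homotopic_walks
      (map (add_mset (hd (chosen_path y))) (token_walk S (chosen_path z)) @
         token_walk (last (token_walk S (chosen_path z))) (chosen_path y))
      (token_walk (hd (token_walk S (chosen_path z))) (chosen_path y) @
         map (add_mset (last (chosen_path y))) (token_walk S (chosen_path z)))"
    by (simp add: S_def)
  then have swap: "homotopic_walks
      (token_walk (add_mset a S) (chosen_path z) @ token_walk (add_mset z S) (chosen_path y))
      (token_walk (add_mset a S) (chosen_path y) @ token_walk (add_mset y S) (chosen_path z))"
    using \<open>y \<in> V\<close> \<open>z \<in> V\<close>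
    by (simp add: hd_token_walk last_token_walk map_add_mset_token_walk chosen_path)
  have "walk (disperse (add_mset a (add_mset a B)) L)"
    using assms root_in_V by (intro walk_disperse) auto
  then have "homotopic_walks
      (disperse (add_mset a (add_mset a B)) L @
         token_walk (add_mset a S) (chosen_path z) @ token_walk (add_mset z S) (chosen_path y))
      (disperse (add_mset a (add_mset a B)) L @
         token_walk (add_mset a S) (chosen_path y) @ token_walk (add_mset y S) (chosen_path z))"
    by (rule homotopic_walks_append_left[OF swap])
      (use assms \<open>z \<in> V\<close> in \<open>simp add: last_disperse hd_token_walk chosen_path S_def\<close>)
  then show ?thesis by (simp add: S_def)
qed

lemma disperse_Cons_cong:
  assumes "homotopic_walks (disperse (add_mset a B) L) (disperse (add_mset a B) L')"
    and "mset L = mset L'" "set (y # L) \<subseteq> V" "set_mset B \<subseteq> V" "size B + length L + 1 = n"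
  shows "homotopic_walks (disperse B (y # L)) (disperse B (y # L'))"
proof -
  have "walk (token_walk (B + mset L) (chosen_path y))"
    using assms(3-5) by (intro walk_token_walk chosen_path) auto
  moreover have "last (disperse (add_mset a B) L) = hd (token_walk (B + mset L) (chosen_path y))"
    using assms by (simp add: last_disperse hd_token_walk chosen_path)
  ultimately show ?thesis
    using homotopic_walks_append_right[OF assms(1)] assms(2) by simp
qed

lemma disperse_move_to_front:
  assumes "set (L1 @ y # L2) \<subseteq> V" "set_mset B \<subseteq> V" "size B + length L1 + length L2 + 1 = n"
  shows "homotopic_walks (disperse B (L1 @ y # L2)) (disperse B (y # L1 @ L2))"
  using assms
proof (induction L1 arbitrary: B)
  case Nil
  then have "walk (disperse B (y # L2))" by (intro walk_disperse) auto
  then show ?case by (simp add: homotopic_walks_refl)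
next
  case (Cons x L1)
  have "homotopic_walks (disperse (add_mset a B) (L1 @ y # L2))
      (disperse (add_mset a B) (y # L1 @ L2))"
    using Cons.IH[of "add_mset a B"] Cons.prems root_in_V by auto
  then have "homotopic_walks (disperse B (x # L1 @ y # L2)) (disperse B (x # y # L1 @ L2))"
    by (rule disperse_Cons_cong) (use Cons.prems in auto)
  also have "homotopic_walks \<dots> (disperse B (y # x # L1 @ L2))"
    by (rule disperse_swap) (use Cons.prems in auto)
  finally show ?case by simp
qed

lemma disperse_perm:
  assumes "mset L = mset L'" "set L \<subseteq> V" "set_mset B \<subseteq> V" "size B + length L = n"
  shows "homotopic_walks (disperse B L) (disperse B L')"
  using assms
proof (induction L arbitrary: L' B)
  case Nil
  then show ?case by (simp add: homotopic_walks_refl power_walk_iff)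
next
  case (Cons y L)
  obtain L1 L2 where L': "L' = L1 @ y # L2"
    using Cons.prems(1) by (metis list.set_intros(1) set_mset_mset split_list)
  have perm: "mset L = mset (L1 @ L2)" using Cons.prems(1) L' by simp
  have "homotopic_walks (disperse (add_mset a B) L) (disperse (add_mset a B) (L1 @ L2))"
    using Cons.IH[OF perm] Cons.prems root_in_V by auto
  then have "homotopic_walks (disperse B (y # L)) (disperse B (y # L1 @ L2))"
    by (rule disperse_Cons_cong[OF _ perm]) (use Cons.prems in auto)
  also have "homotopic_walks \<dots> (disperse B L')"
  proof -
    have "set L' = set (y # L)" "length L' = length (y # L)"
      using Cons.prems(1) by (metis set_mset_mset, metis size_mset)
    then show ?thesis
      using L' Cons.prems disperse_move_to_front[of L1 y L2 B] homotopic_walks_sym by auto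
  qed
  finally show ?case .
qed

lemma disperse_edge:
  assumes L: "set L \<subseteq> V" "Suc (length L) = n" and vw: "E v w"
  shows "homotopic_walks (disperse {#} (v # L) @ [add_mset w (mset L)])
    (token_walk (replicate_mset (length L) a) (chosen_path v @ rev (chosen_path w)) @
       disperse {#} (w # L))"
proof -
  define S where "S = mset L"
  define D where "D = disperse {#a#} L"
  define T where "T = token_walk S (chosen_path w)"
  define \<beta> where "\<beta> = chosen_path v @ rev (chosen_path w)"
  have "v \<in> V" "w \<in> V" using vw simple by (auto simp: simple_graph_def)
  have SV: "set_mset S \<subseteq> V" "Suc (size S) = n" using L by (auto simp: S_def)
  have wT: "walk T" unfolding T_def using SV \<open>w \<in> V\<close> by (intro walk_token_walk chosen_path)
  have T: "T \<noteq> []" "last T = add_mset w S" "hd T = add_mset a S"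
    using \<open>w \<in> V\<close> by (simp_all add: T_def last_token_walk hd_token_walk chosen_path)
  have wD: "walk D" unfolding D_def using L root_in_V by (intro walk_disperse) auto
  have D: "last D = add_mset a S" "hd D = replicate_mset n a"
    using L by (auto simp: D_def S_def last_disperse hd_disperse)
  have \<beta>: "G.walk \<beta>" "hd \<beta> = a" "last \<beta> = a" "\<beta> \<noteq> []"
    using chosen_loop[OF vw] by (simp_all add: \<beta>_def G.walk_def)
  have v_step: "walk (token_walk S (chosen_path v) @ [add_mset w S])"
  proof -
    have "walk [add_mset w S]" using SV \<open>w \<in> V\<close> by (simp add: power_walk_iff)
    moreover have "adj_or_eq (add_mset v S) (add_mset w S)"
      unfolding adj_or_eq_def reduced_power_adj_def using vw
        by (intro disjI2 exI[of _ v] exI[of _ w]) simp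
    ultimately show ?thesis
      using walk_token_walk[OF chosen_path(1)[OF \<open>v \<in> V\<close>] SV] \<open>v \<in> V\<close>
      by (simp add: walk_append last_token_walk chosen_path)
  qed
  have "homotopic_walks (rev T @ T) [add_mset w S]"
    using homotopic_walks_append_rev[OF walk_rev[OF wT]] T by (simp add: hd_rev)
  then have "homotopic_walks (token_walk S (chosen_path v) @ rev T @ T)
      (token_walk S (chosen_path v) @ [add_mset w S])"
    by (rule homotopic_walks_append_left)
      (use v_step T chosen_path(4)[OF \<open>v \<in> V\<close>] in \<open>auto simp: walk_append hd_rev\<close>)
  then have "homotopic_walks (token_walk S (chosen_path v) @ [add_mset w S])
      (token_walk S \<beta> @ T)"
    by (simp add: homotopic_walks_sym \<beta>_def T_def token_walk_append token_walk_rev)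
  then have "homotopic_walks (D @ token_walk S (chosen_path v) @ [add_mset w S])
      (D @ token_walk S \<beta> @ T)"
    by (rule homotopic_walks_append_left[OF _ wD])
      (use D chosen_path[OF \<open>v \<in> V\<close>] in \<open>simp add: hd_token_walk\<close>)
  also have "homotopic_walks (D @ token_walk S \<beta> @ T)
      (token_walk (replicate_mset (length L) a) \<beta> @ D @ T)"
  proof -
    have "power_walk (length L) (disperse {#} L)"
      using power_walk_disperse[OF L(1), of "{#}"] by simp
    from token_walk_commute[OF this \<beta>(1)] L \<beta>
    have "homotopic_walks (D @ token_walk S \<beta>) (token_walk (replicate_mset (length L) a) \<beta> @ D)"
      using disperse_add[of "{#}" "{#a#}" L]
      by (simp add: D_def S_def hd_disperse last_disperse)
    from homotopic_walks_append_right[OF this wT] show ?thesis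
      using \<beta> T by (simp add: last_token_walk)
  qed
  finally show ?thesis by (simp add: D_def S_def T_def \<beta>_def)
qed

end

section \<open>Loops moving a single token\<close>

locale based_reduced_power = rooted_reduced_power +
  fixes x0 :: "'a multiset"
  assumes root_in_base: "a \<in># x0" and base_vertex: "x0 \<in> reduced_power_verts V n"
begin

definition rest_list :: "'a list" where
  "rest_list = (SOME L. mset L = x0 - {#a#})"

definition gather :: "'a multiset list" where
  "gather = rev (disperse {#a#} rest_list)"

definition canonical_walk :: "'a list \<Rightarrow> 'a multiset list" where
  "canonical_walk L = gather @ disperse {#} L"

lemma base_eq_add_root: "x0 = add_mset a (x0 - {#a#})"
  using root_in_base by simp

lemma base_minus_root: "set_mset (x0 - {#a#}) \<subseteq> V" "Suc (size (x0 - {#a#})) = n"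
  using base_vertex base_eq_add_root by (auto simp: reduced_power_verts_def dest: in_diffD)
    (metis size_add_mset)

lemma rest_list: "mset rest_list = x0 - {#a#}" "set rest_list \<subseteq> V" "Suc (length rest_list) = n"
proof -
  show mset: "mset rest_list = x0 - {#a#}"
    unfolding rest_list_def by (rule someI_ex) (rule ex_mset)
  show "set rest_list \<subseteq> V" "Suc (length rest_list) = n"
    using base_minus_root by (metis mset set_mset_mset, metis mset size_mset)
qed

lemma gather: "walk gather" "hd gather = x0" "last gather = replicate_mset n a" "gather \<noteq> []"
proof -
  have "walk (disperse {#a#} rest_list)"
    using rest_list root_in_V by (intro walk_disperse) auto
  then show "walk gather" "gather \<noteq> []" by (simp_all add: gather_def walk_rev)
  show "hd gather = x0" "last gather = replicate_mset n a"
    using rest_list base_eq_add_root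
    by (simp_all add: gather_def hd_rev last_rev last_disperse hd_disperse flip: rest_list(3))
qed

lemma canonical_walk:
  assumes "set L \<subseteq> V" "length L = n"
  shows "walk (canonical_walk L)" "hd (canonical_walk L) = x0" "last (canonical_walk L) = mset L"
proof -
  have "walk (disperse {#} L)" using assms by (intro walk_disperse) auto
  then show "walk (canonical_walk L)"
    using gather assms by (simp add: canonical_walk_def walk_append hd_disperse)
  show "hd (canonical_walk L) = x0" "last (canonical_walk L) = mset L"
    using gather assms by (simp_all add: canonical_walk_def walk_def last_disperse)
qed

lemma canonical_walk_perm:
  assumes "mset L = mset L'" "set L \<subseteq> V" "length L = n"
  shows "homotopic_walks (canonical_walk L) (canonical_walk L')"
  unfolding canonical_walk_def
  by (rule homotopic_walks_append_left[OF disperse_perm gather(1)])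
    (use assms gather in \<open>auto simp: hd_disperse\<close>)

lemma canonical_walk_base:
  assumes "mset L = x0" "set L \<subseteq> V"
  shows "homotopic_walks (canonical_walk L) [x0]"
proof -
  have len: "length L = n" using assms base_vertex by (auto simp: reduced_power_verts_def)
  have "homotopic_walks (canonical_walk L) (canonical_walk (a # rest_list))"
    using assms len rest_list base_eq_add_root by (intro canonical_walk_perm) auto
  also have "canonical_walk (a # rest_list) = gather @ rev gather @ [x0]"
    using rest_list base_eq_add_root
      by (simp add: canonical_walk_def gather_def chosen_path_root token_walk_def)
  also have "homotopic_walks \<dots> (gather @ rev gather)"
  proof -
    have "walk (gather @ rev gather)"
      using gather by (simp add: walk_append walk_rev hd_rev)
    from homotopic_walks_snoc_last[OF this] show ?thesis using gather by (simp add: last_rev)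
  qed
  also have "homotopic_walks \<dots> [x0]"
    using homotopic_walks_append_rev[OF gather(1)] gather by simp
  finally show ?thesis .
qed

lemma gather_commute:
  assumes "G.walk \<beta>" "hd \<beta> = a" "last \<beta> = a"
  shows "homotopic_walks (gather @ token_walk (replicate_mset (n - 1) a) \<beta>)
           (token_walk (x0 - {#a#}) \<beta> @ gather)"
proof -
  have "power_walk (length rest_list) (rev (disperse {#} rest_list))"
    using power_walk_disperse[OF rest_list(2), of "{#}"]
    by (simp add: symmetric_graph.walk_rev[OF power_graph])
  from token_walk_commute[OF this assms(1) rest_list(3)]
  have "homotopic_walks (map (add_mset a) (rev (disperse {#} rest_list)) @
      token_walk (replicate_mset (length rest_list) a) \<beta>)
      (token_walk (x0 - {#a#}) \<beta> @ map (add_mset a) (rev (disperse {#} rest_list)))"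
    using assms rest_list by (simp add: last_rev hd_rev hd_disperse last_disperse)
  moreover have "map (add_mset a) (rev (disperse {#} rest_list)) = gather"
    using disperse_add[of "{#}" "{#a#}" rest_list] by (simp add: gather_def rev_map)
  ultimately show ?thesis by (simp flip: rest_list(3))
qed

lemma canonical_walk_edge:
  assumes "set L \<subseteq> V" "Suc (length L) = n" "E v w"
  shows "homotopic_walks (canonical_walk (v # L) @ [add_mset w (mset L)])
    (token_walk (x0 - {#a#}) (chosen_path v @ rev (chosen_path w)) @ canonical_walk (w # L))"
proof -
  define \<beta> where "\<beta> = chosen_path v @ rev (chosen_path w)"
  have "w \<in> V" using assms(3) simple by (auto simp: simple_graph_def)
  have \<beta>: "G.walk \<beta>" "hd \<beta> = a" "last \<beta> = a" "\<beta> \<noteq> []"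
    using chosen_loop[OF assms(3)] by (simp_all add: \<beta>_def G.walk_def)
  have "homotopic_walks (gather @ disperse {#} (v # L) @ [add_mset w (mset L)])
      (gather @ token_walk (replicate_mset (length L) a) \<beta> @ disperse {#} (w # L))"
    unfolding \<beta>_def
    by (rule homotopic_walks_append_left[OF disperse_edge[OF assms] gather(1)])
      (use gather in \<open>simp add: hd_disperse flip: assms(2)\<close>)
  also have "homotopic_walks \<dots> (token_walk (x0 - {#a#}) \<beta> @ gather @ disperse {#} (w # L))"
  proof -
    have "walk (disperse {#} (w # L))" using assms \<open>w \<in> V\<close> by (intro walk_disperse) auto
    from homotopic_walks_append_right[OF gather_commute[OF \<beta>(1-3)] this] show ?thesis
      using \<beta> by (simp add: last_token_walk hd_disperse flip: assms(2))
  qed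
  finally show ?thesis by (simp add: canonical_walk_def \<beta>_def)
qed

text \<open>Every walk from the base point, followed back along the canonical walk to its endpoint,
  is a loop moving only the token at the root: each step of the walk contributes the closed
  walk of one token through the edge it crosses.\<close>

lemma walk_homotopic_token_walk_canonical:
  assumes "walk P" "hd P = x0"
  shows "\<exists>\<alpha> L. G.walk \<alpha> \<and> hd \<alpha> = a \<and> last \<alpha> = a \<and> mset L = last P \<and> set L \<subseteq> V \<and>
           homotopic_walks P (token_walk (x0 - {#a#}) \<alpha> @ canonical_walk L)"
  using assms
proof (induction P rule: rev_induct)
  case Nil
  then show ?case by (simp add: walk_def)
next
  case (snoc M' P)
  let ?R = "x0 - {#a#}"
  show ?case
  proof (cases "P = []")
    case True
    then have M': "M' = x0" using snoc.prems by simp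
    have L: "mset (a # rest_list) = x0" "set (a # rest_list) \<subseteq> V"
      using rest_list base_eq_add_root root_in_V by auto
    have "walk [x0]" using base_vertex by (simp add: walk_def)
    then have "homotopic_walks [x0] ([x0] @ [x0])"
      using homotopic_walks_sym[OF homotopic_walks_snoc_last[of "[x0]"]] by simp
    also have "homotopic_walks \<dots> ([x0] @ canonical_walk (a # rest_list))"
      using homotopic_walks_append_left[OF homotopic_walks_sym[OF canonical_walk_base[OF L]]
          \<open>walk [x0]\<close>] by simp
    finally have "homotopic_walks [x0] (token_walk ?R [a] @ canonical_walk (a # rest_list))"
      using base_eq_add_root by (simp add: token_walk_def)
    moreover have "G.walk [a]" using root_in_V by (simp add: G.walk_def)
    ultimately show ?thesis using M' True L
      by (intro exI[of _ "[a]"] exI[of _ "a # rest_list"]) auto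
  next
    case False
    have "walk P" "hd P = x0" using snoc.prems False by (auto simp: walk_append)
    then obtain \<alpha> L where \<alpha>: "G.walk \<alpha>" "hd \<alpha> = a" "last \<alpha> = a"
      and L: "mset L = last P" "set L \<subseteq> V"
      and hom: "homotopic_walks P (token_walk ?R \<alpha> @ canonical_walk L)"
      using snoc.IH by blast
    have step: "adj_or_eq (last P) M'" "walk [M']"
      using snoc.prems(1) False by (auto simp: walk_append)
    have "last P \<in> reduced_power_verts V n" using \<open>walk P\<close> by (auto simp: walk_def)
    then have len: "length L = n"
      using L(1) by (auto simp: reduced_power_verts_def simp flip: size_mset)
    show ?thesis
    proof (cases "M' = last P")
      case True
      then have "homotopic_walks (P @ [M']) P" using homotopic_walks_snoc_last \<open>walk P\<close> by simp
      from homotopic_walks_trans[OF this hom]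
      have "homotopic_walks (P @ [M']) (token_walk ?R \<alpha> @ canonical_walk L)" .
      then show ?thesis using \<alpha> L True by auto
    next
      case False
      then obtain v w where v: "v \<in># last P" and vw: "E v w" and M': "M' = last P - {#v#} + {#w#}"
        using step(1) by (auto simp: adj_or_eq_def reduced_power_adj_def)
      define L1 where "L1 = remove1 v L"
      define \<beta> where "\<beta> = chosen_path v @ rev (chosen_path w)"
      have "v \<in> set L" using v L by (metis set_mset_mset)
      then have L1: "mset (v # L1) = mset L" "set L1 \<subseteq> V" "Suc (length L1) = n"
        using v L len set_remove1_subset[of v L] length_pos_if_in_set[of v L]
        by (auto simp: L1_def length_remove1 insert_DiffM)
      have M'_eq: "M' = add_mset w (mset L1)" unfolding M' L1(1)[symmetric] L(1)[symmetric] by simp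
      have "w \<in> V" using vw simple by (auto simp: simple_graph_def)
      have walk_tok: "walk (token_walk ?R \<alpha>)"
        using \<alpha> base_minus_root by (intro walk_token_walk) auto
      have "homotopic_walks (P @ [M']) ((token_walk ?R \<alpha> @ canonical_walk (v # L1)) @ [M'])"
      proof (rule homotopic_walks_append_right[OF _ step(2)])
        have "homotopic_walks (canonical_walk L) (canonical_walk (v # L1))"
          using L1 L len by (intro canonical_walk_perm) auto
        then have "homotopic_walks (token_walk ?R \<alpha> @ canonical_walk L)
            (token_walk ?R \<alpha> @ canonical_walk (v # L1))"
          by (rule homotopic_walks_append_left[OF _ walk_tok])
            (use \<alpha> canonical_walk len L(2) base_eq_add_root in \<open>simp add: last_token_walk
              G.walk_def\<close>)
        with hom show "homotopic_walks P (token_walk ?R \<alpha> @ canonical_walk (v # L1))"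
          by (rule homotopic_walks_trans)
        show "adj_or_eq (last P) (hd [M'])" using step(1) by simp
      qed
      also have "homotopic_walks \<dots> (token_walk ?R \<alpha> @ token_walk ?R \<beta> @ canonical_walk (w # L1))"
      proof -
        have "homotopic_walks (canonical_walk (v # L1) @ [M'])
            (token_walk ?R \<beta> @ canonical_walk (w # L1))"
          using canonical_walk_edge[OF L1(2,3) vw] by (simp add: \<beta>_def M'_eq)
        moreover have "canonical_walk (v # L1) \<noteq> []" "hd (canonical_walk (v # L1)) = x0"
          using canonical_walk[of "v # L1"] L1 \<open>v \<in> set L\<close> L by (auto simp: walk_def)
        ultimately show ?thesis
          using homotopic_walks_append_left[OF _ walk_tok] \<alpha> base_eq_add_root
          by (simp add: last_token_walk G.walk_def)
      qed
      finally have "homotopic_walks (P @ [M']) (token_walk ?R (\<alpha> @ \<beta>) @ canonical_walk (w # L1))"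
        by (simp add: token_walk_append)
      moreover have "G.walk (\<alpha> @ \<beta>)" "hd (\<alpha> @ \<beta>) = a" "last (\<alpha> @ \<beta>) = a"
      proof -
        have \<beta>: "G.walk \<beta>" "hd \<beta> = a" "last \<beta> = a" using chosen_loop[OF vw] by (simp_all add: \<beta>_def)
        moreover have "\<alpha> \<noteq> []" "\<beta> \<noteq> []" using \<alpha>(1) \<beta>(1) by (simp_all add: G.walk_def)
        ultimately show "G.walk (\<alpha> @ \<beta>)" "hd (\<alpha> @ \<beta>) = a" "last (\<alpha> @ \<beta>) = a"
          using \<alpha> by (simp_all add: G.walk_append)
      qed
      moreover have "mset (w # L1) = last (P @ [M'])" "set (w # L1) \<subseteq> V"
        using M'_eq L1 \<open>w \<in> V\<close> by auto
      ultimately show ?thesis by blast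
    qed
  qed
qed

theorem loop_homotopic_token_walk:
  assumes "walk P" "hd P = x0" "last P = x0"
  shows "\<exists>\<alpha>. G.walk \<alpha> \<and> hd \<alpha> = a \<and> last \<alpha> = a \<and> homotopic_walks P (token_walk (x0 - {#a#}) \<alpha>)"
proof -
  obtain \<alpha> L where \<alpha>: "G.walk \<alpha>" "hd \<alpha> = a" "last \<alpha> = a" and L: "mset L = x0" "set L \<subseteq> V"
    and hom: "homotopic_walks P (token_walk (x0 - {#a#}) \<alpha> @ canonical_walk L)"
    using walk_homotopic_token_walk_canonical[OF assms(1,2)] assms(3) by auto
  have walk_tok: "walk (token_walk (x0 - {#a#}) \<alpha>)" using \<alpha> base_minus_root
    by (intro walk_token_walk) auto
  have last_tok: "last (token_walk (x0 - {#a#}) \<alpha>) = x0"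
    using \<alpha> base_eq_add_root by (simp add: last_token_walk G.walk_def)
  have "length L = n" using L base_vertex by (auto simp: reduced_power_verts_def)
  then have "homotopic_walks (token_walk (x0 - {#a#}) \<alpha> @ canonical_walk L)
      (token_walk (x0 - {#a#}) \<alpha> @ [x0])"
    using homotopic_walks_append_left[OF canonical_walk_base[OF L] walk_tok] canonical_walk L
      last_tok by simp
  also have "homotopic_walks \<dots> (token_walk (x0 - {#a#}) \<alpha>)"
    using homotopic_walks_snoc_last[OF walk_tok] last_tok by simp
  finally show ?thesis using hom \<alpha> homotopic_walks_trans by blast
qed

end

section \<open>Commutativity\<close>

context reduced_power
begin

lemma closed_walks_commute:
  assumes connected: "connected_graph V E" and base: "x0 \<in> reduced_power_verts V n"
    and n: "2 \<le> n"
    and p: "walk p" "hd p = x0" "last p = x0" and q: "walk q" "hd q = x0" "last q = x0"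
  shows "homotopic_walks (p @ q) (q @ p)"
proof -
  have size: "size x0 = n" "set_mset x0 \<subseteq> V" using base by (auto simp: reduced_power_verts_def)
  then obtain a b D where x0: "x0 = add_mset a (add_mset b D)" using n
    by (metis Suc_le_length_iff numeral_2_eq_2 size_mset ex_mset mset.simps(2))
  then have "a \<in> V" "b \<in> V" "set_mset D \<subseteq> V" "Suc (Suc (size D)) = n" using size by auto
  interpret A: based_reduced_power V E n a x0
    using \<open>a \<in> V\<close> connected base x0 by unfold_locales simp_all
  interpret B: based_reduced_power V E n b x0
    using \<open>b \<in> V\<close> connected base x0 by unfold_locales simp_all
  obtain \<alpha> where \<alpha>: "G.walk \<alpha>" "hd \<alpha> = a" "last \<alpha> = a"
    and p\<alpha>: "homotopic_walks p (token_walk (add_mset b D) \<alpha>)"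
    using A.loop_homotopic_token_walk[OF p] x0 by auto
  obtain \<beta> where \<beta>: "G.walk \<beta>" "hd \<beta> = b" "last \<beta> = b"
    and q\<beta>: "homotopic_walks q (token_walk (add_mset a D) \<beta>)"
    using B.loop_homotopic_token_walk[OF q] x0 by (auto simp: add_mset_commute)
  have "\<alpha> \<noteq> []" "\<beta> \<noteq> []" using \<alpha>(1) \<beta>(1) by (simp_all add: G.walk_def)
  have "power_walk (Suc (size D)) (token_walk D \<alpha>)"
    using \<alpha>(1) \<open>set_mset D \<subseteq> V\<close> by (rule power_walk_token_walk)
  from token_walk_commute[OF this \<beta>(1) \<open>Suc (Suc (size D)) = n\<close>]
  have swap: "homotopic_walks (token_walk (add_mset b D) \<alpha> @ token_walk (add_mset a D) \<beta>)
      (token_walk (add_mset a D) \<beta> @ token_walk (add_mset b D) \<alpha>)"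
    using \<alpha> \<beta> \<open>\<alpha> \<noteq> []\<close> by (simp add: hd_token_walk last_token_walk map_add_mset_token_walk)
  have "homotopic_walks (p @ q) (token_walk (add_mset b D) \<alpha> @ token_walk (add_mset a D) \<beta>)"
    using homotopic_walks_append[OF p\<alpha> q\<beta>] p q by simp
  also note swap
  also have "homotopic_walks (token_walk (add_mset a D) \<beta> @ token_walk (add_mset b D) \<alpha>) (q @ p)"
    using homotopic_walks_sym[OF homotopic_walks_append[OF q\<beta> p\<alpha>]] p q by simp
  finally show ?thesis .
qed

lemma loop_concat_commute:
  assumes "connected_graph V E" and x0: "x0 \<in> reduced_power_verts V n" and "2 \<le> n"
    and f: "based_loop (reduced_power_verts V n) (reduced_power_adj E) x0 f"
    and g: "based_loop (reduced_power_verts V n) (reduced_power_adj E) x0 g"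
  shows "based_homotopic (reduced_power_verts V n) (reduced_power_adj E) x0
           (loop_concat x0 f g) (loop_concat x0 g f)"
proof -
  let ?F = "walk_of_loop x0 f" and ?G = "walk_of_loop x0 g"
  have "based_homotopic (reduced_power_verts V n) (reduced_power_adj E) x0
      (loop_concat x0 f g) (loop_of_walk x0 (?F @ ?G))"
    by (rule loop_concat_homotopic_walk_append[OF x0 f g])
  also have "based_homotopic (reduced_power_verts V n) (reduced_power_adj E) x0 \<dots>
      (loop_of_walk x0 (?G @ ?F))"
    using walk_of_loop[OF f] walk_of_loop[OF g] assms(1-3)
    by (intro homotopic_walks_based_homotopic closed_walks_commute x0) (auto simp: walk_def)
  also have "based_homotopic (reduced_power_verts V n) (reduced_power_adj E) x0 \<dots>
      (loop_concat x0 g f)"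
    by (rule based_homotopic_sym[OF loop_concat_homotopic_walk_append[OF x0 g f]])
  finally show ?thesis .
qed

end

theorem proposition4p6:
  fixes V :: "'a set" and E :: "'a \<Rightarrow> 'a \<Rightarrow> bool" and n :: nat and x0 :: "'a multiset"
  assumes "simple_graph V E" and "connected_graph V E" and "locally_finite_graph V E"
    and "n \<ge> 2"
    and "x0 \<in> reduced_power_verts V n"
  shows "\<forall>X\<in>carrier (A1 (reduced_power_verts V n) (reduced_power_adj E) x0).
         \<forall>Y\<in>carrier (A1 (reduced_power_verts V n) (reduced_power_adj E) x0).
           X \<otimes>\<^bsub>A1 (reduced_power_verts V n) (reduced_power_adj E) x0\<^esub> Y
           = Y \<otimes>\<^bsub>A1 (reduced_power_verts V n) (reduced_power_adj E) x0\<^esub> X"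
proof (intro ballI)
  interpret reduced_power V E n by unfold_locales (rule assms(1))
  fix X Y
  assume "X \<in> carrier (A1 (reduced_power_verts V n) (reduced_power_adj E) x0)"
    and "Y \<in> carrier (A1 (reduced_power_verts V n) (reduced_power_adj E) x0)"
  then have "based_homotopic (reduced_power_verts V n) (reduced_power_adj E) x0
      (loop_concat x0 (SOME f. f \<in> X) (SOME g. g \<in> Y))
      (loop_concat x0 (SOME g. g \<in> Y) (SOME f. f \<in> X))"
    using assms(2,4,5) by (intro loop_concat_commute A1_representative)
  then show "X \<otimes>\<^bsub>A1 (reduced_power_verts V n) (reduced_power_adj E) x0\<^esub> Y
           = Y \<otimes>\<^bsub>A1 (reduced_power_verts V n) (reduced_power_adj E) x0\<^esub> X"
    by (simp add: A1_def loop_class_eqI)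
qed

end
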